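(* Consider the optimal clique cover delivery problem for a system with $K$ users and a given set $\mathcal{W}$ of subfiles to be delivered, and let $\mathscr{P}$ be the set of all cliques (feasible packets) that can be formed from $\mathcal{W}$. Run the following greedy algorithm with input $\mathcal{W}$ and $\mathscr{P}$: set $\mathscr{C}=\emptyset$, $\mathcal{E}=\mathcal{W}$, $\mathscr{S}=\mathscr{P}$; while $\mathcal{E}\neq\emptyset$: choose $\mathcal{P}^*\in\arg\max_{\mathcal{P}\in\mathscr{S}} |\mathcal{P}|/\|\mathcal{P}\|$ (ties broken arbitrarily), set $\mathscr{C}=\mathscr{C}\cup\{\mathcal{P}^*\}$, set $\mathcal{E}=\mathcal{E}\setminus\mathcal{P}^*$, and remove from $\mathscr{S}$ every $\mathcal{S}\in\mathscr{S}$ with $\mathcal{S}\cap\mathcal{P}^*\neq\emptyset$; output $\mathscr{C}$. Then this algorithm achieves a $(1+\log K)$-approximation to the optimal clique cover delivery problem, i.e., $\mathscr{C}$ is a set of cliques covering $\mathcal{W}$ and $\sum_{\mathcal{P}\in\mathscr{C}}\|\mathcal{P}\|\le(1+\log K)\cdot\mathrm{OPT}$, where $\mathrm{OPT}$ is the optimal value of the problem.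
   Context: Setting: a server and $K$ users, $[K]=\{1,\dots,K\}$; user $k$ requests file $W_k$. For $k\in[K]$ and $\mathcal{A}\subseteq[K]\setminus\{k\}$, $W_{k,\mathcal{A}}$ denotes the subfile of $W_k$ consisting of the bits cached exactly by the users in $\mathcal{A}$, and $\|W_{k,\mathcal{A}}\|$ is its size in bits (a nonnegative integer). The set of subfiles to be delivered is $\mathcal{W}=\{W_{k,\mathcal{A}}: k\in[K],\ \mathcal{A}\subseteq[K]\setminus\{k\},\ \|W_{k,\mathcal{A}}\|\neq 0\}$ (the sizes may be arbitrary). A clique (feasible packet) is a nonempty set $\mathcal{P}\subseteq\mathcal{W}$ of the form $\{W_{k,\mathcal{A}_k}: k\in\mathcal{M}\}$ for some $\mathcal{M}\subseteq[K]$ (at most one subfile per user) such that $k\in\mathcal{A}_{k'}$ for all distinct $k,k'\in\mathcal{M}$; equivalently, a clique of the side-information graph on vertex set $\mathcal{W}$ in which $W_{k,\mathcal{A}}$ and $W_{l,\mathcal{B}}$ ($k\neq l$) are adjacent iff $l\in\mathcal{A}$ and $k\in\mathcal{B}$. The size of a clique is $\|\mathcal{P}\|=\max_{W\in\mathcal{P}}\|W\|$, and $|\mathcal{P}|$ is its number of subfiles. The optimal clique cover delivery problem: choose a set of cliques whose union is $\mathcal{W}$ minimizing the sum of their sizes. *)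

theory Defs
  imports Complex_Main
begin

text \<open>A subfile W_{k,A} is represented by the pair (k, A) :: nat \<times> nat set.
  The sizes are given by an arbitrary function sz :: nat \<Rightarrow> nat set \<Rightarrow> nat
  (sz k A = number of bits of W_{k,A}).\<close>

type_synonym subfile = "nat \<times> nat set"

definition subfiles :: "nat \<Rightarrow> (nat \<Rightarrow> nat set \<Rightarrow> nat) \<Rightarrow> subfile set" where
  "subfiles K sz = {(k, A). k \<in> {1..K} \<and> A \<subseteq> {1..K} - {k} \<and> sz k A \<noteq> 0}"

definition is_clique :: "nat \<Rightarrow> (nat \<Rightarrow> nat set \<Rightarrow> nat) \<Rightarrow> subfile set \<Rightarrow> bool" where
  "is_clique K sz P \<longleftrightarrow> P \<noteq> {} \<and> P \<subseteq> subfiles K sz \<and>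
     (\<forall>(k, A) \<in> P. \<forall>(l, B) \<in> P. (k, A) \<noteq> (l, B) \<longrightarrow> k \<noteq> l \<and> l \<in> A \<and> k \<in> B)"

definition cliques :: "nat \<Rightarrow> (nat \<Rightarrow> nat set \<Rightarrow> nat) \<Rightarrow> subfile set set" where
  "cliques K sz = {P. is_clique K sz P}"

definition clique_size :: "(nat \<Rightarrow> nat set \<Rightarrow> nat) \<Rightarrow> subfile set \<Rightarrow> nat" where
  "clique_size sz P = Max ((\<lambda>(k, A). sz k A) ` P)"

definition cover_cost :: "(nat \<Rightarrow> nat set \<Rightarrow> nat) \<Rightarrow> subfile set set \<Rightarrow> nat" where
  "cover_cost sz C = (\<Sum>P\<in>C. clique_size sz P)"

definition is_clique_cover :: "nat \<Rightarrow> (nat \<Rightarrow> nat set \<Rightarrow> nat) \<Rightarrow> subfile set set \<Rightarrow> bool" where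
  "is_clique_cover K sz C \<longleftrightarrow> C \<subseteq> cliques K sz \<and> \<Union>C = subfiles K sz"

definition OPT :: "nat \<Rightarrow> (nat \<Rightarrow> nat set \<Rightarrow> nat) \<Rightarrow> nat" where
  "OPT K sz = Min {cover_cost sz C | C. is_clique_cover K sz C}"

text \<open>One iteration of the greedy algorithm on states (C, E, S)
  (chosen cliques, uncovered subfiles, remaining candidate cliques);
  ties in the argmax are broken arbitrarily (nondeterministic choice).\<close>
definition ratio :: "(nat \<Rightarrow> nat set \<Rightarrow> nat) \<Rightarrow> subfile set \<Rightarrow> real" where
  "ratio sz P = real (card P) / real (clique_size sz P)"

inductive greedy_step :: "(nat \<Rightarrow> nat set \<Rightarrow> nat)
    \<Rightarrow> subfile set set \<times> subfile set \<times> subfile set set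
    \<Rightarrow> subfile set set \<times> subfile set \<times> subfile set set \<Rightarrow> bool"
  for sz where
  "E \<noteq> {} \<Longrightarrow> P \<in> S \<Longrightarrow> (\<forall>Q\<in>S. ratio sz Q \<le> ratio sz P) \<Longrightarrow>
   greedy_step sz (C, E, S) (C \<union> {P}, E - P, {Q \<in> S. Q \<inter> P = {}})"

definition greedy_output :: "nat \<Rightarrow> (nat \<Rightarrow> nat set \<Rightarrow> nat) \<Rightarrow> subfile set set \<Rightarrow> bool" where
  "greedy_output K sz C \<longleftrightarrow> (\<exists>S. (greedy_step sz)\<^sup>*\<^sup>* ({}, subfiles K sz, cliques K sz) (C, {}, S))"

end

theory Submission
  imports Defs "HOL-Analysis.Harmonic_Numbers"
begin

text \<open>Fix an optimal cover \<open>F\<close> and charge the subfiles still uncovered against it through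
  the potential \<open>\<Phi>(E) = \<Sum>Q\<in>F. \<parallel>Q\<parallel> \<cdot> H(|Q \<inter> E|)\<close>, with \<open>H\<close> the harmonic numbers.
  Every \<open>Q \<inter> E\<close> is itself a candidate clique, so the greedy choice \<open>P\<close> has price
  \<open>\<parallel>P\<parallel>/|P| \<le> \<parallel>Q\<parallel>/|Q \<inter> E|\<close>; spreading \<open>\<parallel>P\<parallel>\<close> over the \<open>|Q \<inter> P|\<close> subfiles that \<open>P\<close>
  removes from each \<open>Q\<close> shows that a greedy step costs at most the drop of \<open>\<Phi>\<close>.
  Hence the greedy cost is at most \<open>\<Phi>(W) \<le> H(K) \<cdot> OPT \<le> (1 + ln K) \<cdot> OPT\<close>,
  since a clique has at most one subfile per user.\<close>

lemma harm_diff_ge: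
  assumes "r \<le> m"
  shows "real r / real m \<le> harm m - harm (m - r)"
proof -
  have "real d / real (b + d) \<le> harm (b + d) - harm b" for b d :: nat
  proof (induction d)
    case 0
    then show ?case by simp
  next
    case (Suc d)
    have "real d / real (b + Suc d) \<le> real d / real (b + d)"
      by (cases "b + d = 0") (auto intro: divide_left_mono)
    moreover have "harm (b + Suc d) = harm (b + d) + 1 / real (b + Suc d)"
      by (simp add: harm_Suc inverse_eq_divide)
    moreover have "real (Suc d) / real (b + Suc d) = real d / real (b + Suc d) + 1 / real (b + Suc d)"
      by (simp add: add_divide_distrib[symmetric])
    ultimately show ?case using Suc by linarith
  qed
  from this[of r "m - r"] assms show ?thesis by simp
qed

lemma harm_le_one_plus_ln: "harm n \<le> 1 + ln (real n)"
proof (cases "n = 0")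
  case False
  then have "harm n - ln (real n) \<le> harm 1 - ln (real (1::nat))"
    using euler_mascheroni_sequence_decreasing[of 1 n] by simp
  then show ?thesis by (simp add: harm_def)
qed (simp add: harm_def)

lemma finite_subfiles: "finite (subfiles K sz)"
proof (rule finite_subset)
  show "subfiles K sz \<subseteq> {1..K} \<times> Pow {1..K}"
    unfolding subfiles_def by auto
qed auto

lemma is_clique_subset_subfiles: "is_clique K sz P \<Longrightarrow> P \<subseteq> subfiles K sz"
  unfolding is_clique_def by auto

lemma finite_clique: "is_clique K sz P \<Longrightarrow> finite P"
  using finite_subset[OF is_clique_subset_subfiles finite_subfiles] .

lemma is_clique_nonempty: "is_clique K sz P \<Longrightarrow> P \<noteq> {}"
  unfolding is_clique_def by simp

lemma card_clique_pos: "is_clique K sz P \<Longrightarrow> card P > 0"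
  using finite_clique is_clique_nonempty by (auto simp: card_gt_0_iff)

lemma finite_cliques: "finite (cliques K sz)"
proof (rule finite_subset)
  show "cliques K sz \<subseteq> Pow (subfiles K sz)"
    unfolding cliques_def using is_clique_subset_subfiles by auto
qed (simp add: finite_subfiles)

lemma is_clique_iff:
  "is_clique K sz P \<longleftrightarrow> P \<noteq> {} \<and> P \<subseteq> subfiles K sz \<and>
     (\<forall>x\<in>P. \<forall>y\<in>P. x \<noteq> y \<longrightarrow> fst x \<noteq> fst y \<and> fst y \<in> snd x \<and> fst x \<in> snd y)"
  unfolding is_clique_def by (simp add: split_beta prod_eq_iff)

lemma is_clique_subset:
  assumes "is_clique K sz P" "Q \<subseteq> P" "Q \<noteq> {}"
  shows "is_clique K sz Q"
  using assms unfolding is_clique_iff by (meson subset_iff order_trans)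

lemma is_clique_singleton: "e \<in> subfiles K sz \<Longrightarrow> is_clique K sz {e}"
  unfolding is_clique_iff by simp

lemma card_clique_le:
  assumes "is_clique K sz P"
  shows "card P \<le> K"
proof -
  have "inj_on fst P"
    using assms unfolding is_clique_def inj_on_def by fastforce
  then have "card P = card (fst ` P)"
    by (simp add: card_image)
  also have "\<dots> \<le> card {1..K}"
    using is_clique_subset_subfiles[OF assms] unfolding subfiles_def by (intro card_mono) auto
  finally show ?thesis by simp
qed

lemma clique_size_ge_1:
  assumes "is_clique K sz P"
  shows "clique_size sz P \<ge> 1"
proof -
  obtain k A where kA: "(k, A) \<in> P"
    using assms unfolding is_clique_def by auto
  then have "sz k A \<noteq> 0"
    using is_clique_subset_subfiles[OF assms] unfolding subfiles_def by auto
  moreover have "sz k A \<le> clique_size sz P"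
    unfolding clique_size_def using finite_clique[OF assms] kA by (intro Max_ge) force+
  ultimately show ?thesis by linarith
qed

lemma clique_size_mono:
  "Q \<noteq> {} \<Longrightarrow> Q \<subseteq> P \<Longrightarrow> finite P \<Longrightarrow> clique_size sz Q \<le> clique_size sz P"
  unfolding clique_size_def by (intro Max_mono) auto

lemma cover_cost_insert_le:
  "real (cover_cost sz (insert P C)) \<le> real (cover_cost sz C) + real (clique_size sz P)"
  by (cases "finite C") (simp_all add: cover_cost_def sum.insert_if)

lemma OPT_attained:
  assumes "is_clique_cover K sz C"
  obtains F where "is_clique_cover K sz F" "cover_cost sz F = OPT K sz"
proof -
  let ?costs = "{cover_cost sz C | C. is_clique_cover K sz C}"
  have "?costs \<subseteq> cover_cost sz ` Pow (cliques K sz)"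
    unfolding is_clique_cover_def by auto
  then have "finite ?costs"
    using finite_cliques by (rule finite_subset[OF _ finite_imageI[OF finite_Pow_iff[THEN iffD2]]])
  then have "OPT K sz \<in> ?costs"
    unfolding OPT_def using assms by (intro Min_in) auto
  then show ?thesis using that by auto
qed

definition cliques_within :: "nat \<Rightarrow> (nat \<Rightarrow> nat set \<Rightarrow> nat) \<Rightarrow> subfile set \<Rightarrow> subfile set set" where
  "cliques_within K sz E = {Q \<in> cliques K sz. Q \<subseteq> E}"

lemma cliques_within_subfiles: "cliques_within K sz (subfiles K sz) = cliques K sz"
  unfolding cliques_within_def cliques_def using is_clique_subset_subfiles by auto

lemma cliques_within_Diff:
  "P \<subseteq> E \<Longrightarrow> {Q \<in> cliques_within K sz E. Q \<inter> P = {}} = cliques_within K sz (E - P)"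
  unfolding cliques_within_def by auto

definition harmonic_potential ::
    "(nat \<Rightarrow> nat set \<Rightarrow> nat) \<Rightarrow> subfile set set \<Rightarrow> subfile set \<Rightarrow> real" where
  "harmonic_potential sz F E = (\<Sum>Q\<in>F. real (clique_size sz Q) * harm (card (Q \<inter> E)))"

lemma harmonic_potential_empty [simp]: "harmonic_potential sz F {} = 0"
  by (simp add: harmonic_potential_def harm_def)

lemma harmonic_potential_subfiles_le:
  assumes "F \<subseteq> cliques K sz"
  shows "harmonic_potential sz F (subfiles K sz) \<le> (1 + ln (real K)) * real (cover_cost sz F)"
proof -
  have "harm (card (Q \<inter> subfiles K sz)) \<le> 1 + ln (real K)" if "Q \<in> F" for Q
  proof -
    have Q: "is_clique K sz Q"
      using that assms by (auto simp: cliques_def)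
    then have "card (Q \<inter> subfiles K sz) \<le> K"
      using card_clique_le is_clique_subset_subfiles by (simp add: Int_absorb2)
    then have "harm (card (Q \<inter> subfiles K sz)) \<le> (harm K :: real)"
      by (rule harm_mono)
    then show ?thesis using harm_le_one_plus_ln[of K] by linarith
  qed
  then have "harmonic_potential sz F (subfiles K sz) \<le> (\<Sum>Q\<in>F. real (clique_size sz Q) * (1 + ln (real K)))"
    unfolding harmonic_potential_def by (intro sum_mono mult_left_mono) auto
  then show ?thesis
    by (simp add: cover_cost_def sum_distrib_left mult.commute)
qed

lemma greedy_price_le_harm_drop:
  assumes P: "P \<in> cliques_within K sz E"
    and max: "\<forall>Q\<in>cliques_within K sz E. ratio sz Q \<le> ratio sz P"
    and Q: "is_clique K sz Q"
  shows "real (clique_size sz P) / real (card P) * real (card (Q \<inter> P))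
     \<le> real (clique_size sz Q) * (harm (card (Q \<inter> E)) - harm (card (Q \<inter> (E - P))))"
proof -
  define m where "m = card (Q \<inter> E)"
  define r where "r = card (Q \<inter> P)"
  have Pc: "is_clique K sz P" and PE: "P \<subseteq> E"
    using P by (auto simp: cliques_within_def cliques_def)
  have finQ: "finite Q"
    using finite_clique[OF Q] .
  have rm: "r \<le> m"
    unfolding r_def m_def using finQ PE by (intro card_mono) auto
  have "card (Q \<inter> (E - P)) = card (Q \<inter> E - Q \<inter> P)"
    by (rule arg_cong[where f=card]) blast
  also have "\<dots> = m - r"
    unfolding m_def r_def using finQ PE by (subst card_Diff_subset) auto
  finally have card_rest: "card (Q \<inter> (E - P)) = m - r" .
  show ?thesis
  proof (cases "r = 0")
    case True
    then show ?thesis using card_rest by (simp add: r_def m_def)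
  next
    case False
    then have "Q \<inter> E \<noteq> {}" "m > 0"
      using rm by (auto simp: m_def)
    then have QE: "is_clique K sz (Q \<inter> E)" and size_QE: "clique_size sz (Q \<inter> E) \<le> clique_size sz Q"
      using is_clique_subset[OF Q] clique_size_mono[OF _ _ finQ] by auto
    have "ratio sz (Q \<inter> E) \<le> ratio sz P"
      using max QE by (auto simp: cliques_within_def cliques_def)
    then have "real m * real (clique_size sz P) \<le> real (card P) * real (clique_size sz (Q \<inter> E))"
      using clique_size_ge_1[OF QE] clique_size_ge_1[OF Pc]
      by (simp add: ratio_def m_def divide_simps)
    also have "\<dots> \<le> real (card P) * real (clique_size sz Q)"
      using size_QE by (simp add: mult_left_mono)
    finally have price: "real (clique_size sz P) / real (card P) \<le> real (clique_size sz Q) / real m"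
      using \<open>m > 0\<close> card_clique_pos[OF Pc] by (simp add: divide_simps mult.commute)
    have "real (clique_size sz P) / real (card P) * real r \<le> real (clique_size sz Q) * (real r / real m)"
      using mult_right_mono[OF price, of "real r"] by simp
    also have "\<dots> \<le> real (clique_size sz Q) * (harm m - harm (m - r))"
      using harm_diff_ge[OF rm] by (intro mult_left_mono) auto
    finally show ?thesis using card_rest by (simp add: m_def r_def)
  qed
qed

lemma greedy_step_cost_le_potential_drop:
  assumes step: "greedy_step sz (C, E, cliques_within K sz E) (C', E', S')"
    and F: "finite F" "F \<subseteq> cliques K sz" "E \<subseteq> \<Union>F"
  shows "real (cover_cost sz C') + harmonic_potential sz F E'
     \<le> real (cover_cost sz C) + harmonic_potential sz F E"
proof -
  obtain P where C': "C' = C \<union> {P}" and E': "E' = E - P"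
    and P: "P \<in> cliques_within K sz E" and max: "\<forall>Q\<in>cliques_within K sz E. ratio sz Q \<le> ratio sz P"
    using step by (cases rule: greedy_step.cases) blast
  have Pc: "is_clique K sz P" and PE: "P \<subseteq> E"
    using P by (auto simp: cliques_within_def cliques_def)
  have "card P = card (\<Union>Q\<in>F. Q \<inter> P)"
    using PE F(3) by (intro arg_cong[where f=card]) auto
  also have "\<dots> \<le> (\<Sum>Q\<in>F. card (Q \<inter> P))"
    using F(1) by (rule card_UN_le)
  finally have card_P: "real (card P) \<le> (\<Sum>Q\<in>F. real (card (Q \<inter> P)))"
    by (metis of_nat_le_iff of_nat_sum)
  have "real (clique_size sz P) = real (clique_size sz P) / real (card P) * real (card P)"
    using card_clique_pos[OF Pc] by simp
  also have "\<dots> \<le> real (clique_size sz P) / real (card P) * (\<Sum>Q\<in>F. real (card (Q \<inter> P)))"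
    using card_P by (intro mult_left_mono) auto
  also have "\<dots> = (\<Sum>Q\<in>F. real (clique_size sz P) / real (card P) * real (card (Q \<inter> P)))"
    by (simp add: sum_distrib_left)
  also have "\<dots> \<le> (\<Sum>Q\<in>F. real (clique_size sz Q) * (harm (card (Q \<inter> E)) - harm (card (Q \<inter> (E - P)))))"
    using F(2) by (intro sum_mono greedy_price_le_harm_drop[OF P max]) (auto simp: cliques_def)
  also have "\<dots> = harmonic_potential sz F E - harmonic_potential sz F E'"
    by (simp add: harmonic_potential_def E' right_diff_distrib sum_subtractf)
  finally have "real (clique_size sz P) \<le> harmonic_potential sz F E - harmonic_potential sz F E'" .
  moreover have "real (cover_cost sz C') \<le> real (cover_cost sz C) + real (clique_size sz P)"
    using cover_cost_insert_le[of sz P C] C' by simp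
  ultimately show ?thesis by linarith
qed

lemma greedy_run_invariant:
  assumes "(greedy_step sz)\<^sup>*\<^sup>* ({}, subfiles K sz, cliques K sz) (C, E, S)"
  shows "C \<subseteq> cliques K sz \<and> \<Union>C \<union> E = subfiles K sz \<and> S = cliques_within K sz E"
  using assms
proof (induction "(C, E, S)" arbitrary: C E S rule: rtranclp_induct)
  case base
  then show ?case by (simp add: cliques_within_subfiles)
next
  case (step y)
  obtain C0 E0 S0 where y: "y = (C0, E0, S0)"
    by (cases y)
  from step.hyps(2) obtain P where "C = insert P C0" "E = E0 - P" "S = {Q \<in> S0. Q \<inter> P = {}}"
    and "P \<in> S0"
    unfolding y by (auto elim: greedy_step.cases)
  with step.hyps(3)[OF y] show ?case
    using cliques_within_Diff[of P E0 K sz] by (auto simp: cliques_within_def)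
qed

lemma greedy_run_cost_le:
  assumes "(greedy_step sz)\<^sup>*\<^sup>* ({}, subfiles K sz, cliques K sz) (C, E, S)"
    and F: "finite F" "F \<subseteq> cliques K sz" "subfiles K sz \<subseteq> \<Union>F"
  shows "real (cover_cost sz C) + harmonic_potential sz F E \<le> harmonic_potential sz F (subfiles K sz)"
  using assms(1)
proof (induction "(C, E, S)" arbitrary: C E S rule: rtranclp_induct)
  case base
  then show ?case by (simp add: cover_cost_def)
next
  case (step y)
  obtain C0 E0 S0 where y: "y = (C0, E0, S0)"
    by (cases y)
  have inv: "S0 = cliques_within K sz E0" "\<Union>C0 \<union> E0 = subfiles K sz"
    using greedy_run_invariant step.hyps(1) unfolding y by auto
  have "real (cover_cost sz C) + harmonic_potential sz F E
      \<le> real (cover_cost sz C0) + harmonic_potential sz F E0"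
  proof (rule greedy_step_cost_le_potential_drop[OF _ F(1,2)])
    show "greedy_step sz (C0, E0, cliques_within K sz E0) (C, E, S)"
      using step.hyps(2) inv(1) unfolding y by simp
    show "E0 \<subseteq> \<Union>F"
      using inv(2) F(3) by blast
  qed
  also have "\<dots> \<le> harmonic_potential sz F (subfiles K sz)"
    using step.hyps(3)[OF y] .
  finally show ?case .
qed

lemma greedy_run_terminates:
  assumes "finite E" "S = cliques_within K sz E" "E \<subseteq> subfiles K sz"
  shows "\<exists>C' S'. (greedy_step sz)\<^sup>*\<^sup>* (C, E, S) (C', {}, S')"
  using assms
proof (induction E arbitrary: C S rule: finite_psubset_induct)
  case (psubset E)
  show ?case
  proof (cases "E = {}")
    case False
    then obtain e where "e \<in> E" by auto
    then have "{e} \<in> S"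
      using psubset.prems is_clique_singleton[of e K sz] by (auto simp: cliques_within_def cliques_def)
    moreover have "finite S"
      unfolding psubset.prems(1) cliques_within_def using finite_cliques by (rule finite_subset[rotated]) blast
    ultimately have "Max (ratio sz ` S) \<in> ratio sz ` S"
      by (intro Max_in) auto
    then obtain P where P: "P \<in> S" and "ratio sz P = Max (ratio sz ` S)"
      by auto
    with \<open>finite S\<close> have "\<forall>Q\<in>S. ratio sz Q \<le> ratio sz P"
      by simp
    with False P have step: "greedy_step sz (C, E, S) (C \<union> {P}, E - P, {Q \<in> S. Q \<inter> P = {}})"
      by (rule greedy_step.intros)
    have "is_clique K sz P" "P \<subseteq> E"
      using P psubset.prems(1) by (simp_all add: cliques_within_def cliques_def)
    then have smaller: "E - P \<subset> E"
      using is_clique_nonempty by blast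
    have remaining: "{Q \<in> S. Q \<inter> P = {}} = cliques_within K sz (E - P)"
      using cliques_within_Diff[OF \<open>P \<subseteq> E\<close>] psubset.prems(1) by simp
    have "E - P \<subseteq> subfiles K sz"
      using psubset.prems(2) by blast
    then obtain C' S' where "(greedy_step sz)\<^sup>*\<^sup>* (C \<union> {P}, E - P, {Q \<in> S. Q \<inter> P = {}}) (C', {}, S')"
      using psubset.IH[OF smaller remaining] by blast
    with step show ?thesis
      by (meson converse_rtranclp_into_rtranclp)
  qed blast
qed

theorem lemma1:
  fixes K :: nat and sz :: "nat \<Rightarrow> nat set \<Rightarrow> nat"
  shows "(\<exists>C. greedy_output K sz C) \<and>
         (\<forall>C. greedy_output K sz C \<longrightarrow>
            is_clique_cover K sz C \<and>
            real (cover_cost sz C) \<le> (1 + ln (real K)) * real (OPT K sz))"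
proof (intro conjI allI impI)
  show "\<exists>C. greedy_output K sz C"
    using greedy_run_terminates[OF finite_subfiles cliques_within_subfiles[symmetric] order_refl]
    unfolding greedy_output_def by blast
next
  fix C
  assume "greedy_output K sz C"
  then obtain S where run: "(greedy_step sz)\<^sup>*\<^sup>* ({}, subfiles K sz, cliques K sz) (C, {}, S)"
    unfolding greedy_output_def by auto
  then show "is_clique_cover K sz C"
    using greedy_run_invariant[OF run] unfolding is_clique_cover_def by simp
  then obtain F where "is_clique_cover K sz F" and opt: "cover_cost sz F = OPT K sz"
    by (rule OPT_attained)
  then have F: "F \<subseteq> cliques K sz" "subfiles K sz \<subseteq> \<Union>F"
    unfolding is_clique_cover_def by auto
  then have "real (cover_cost sz C) \<le> harmonic_potential sz F (subfiles K sz)"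
    using greedy_run_cost_le[OF run finite_subset[OF F(1) finite_cliques]] by simp
  also have "\<dots> \<le> (1 + ln (real K)) * real (OPT K sz)"
    using harmonic_potential_subfiles_le[OF F(1)] opt by simp
  finally show "real (cover_cost sz C) \<le> (1 + ln (real K)) * real (OPT K sz)" .
qed

end
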